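(* Let $g:\mathbb C\times\mathbb R\to\mathbb R$ be smooth and let $f=(g,\mathrm{pr}_{\mathbb R}):\mathbb C\times\mathbb R\to\mathbb R^2$. Then the map $f\circ \mathrm{Hopf}:\mathbb C^2\to\mathbb R^2$ is an $S$-invariant nodal Lagrangian fibration with a single focus-focus singularity at the origin if and only if $f$ is a submersion.
   Context: $\mathbb C^2$ carries its standard Kähler structure with coordinates $z_1,z_2$. $\mu(z_1,z_2)=\pi(|z_1|^2-|z_2|^2)$ generates the action of $S=\mathbb R/\mathbb Z$ given by $\theta\cdot(z_1,z_2)=(e^{2\pi i\theta}z_1,e^{-2\pi i\theta}z_2)$, and $\mathrm{Hopf}:\mathbb C^2\to\mathbb C\times\mathbb R$, $(z_1,z_2)\mapsto(2\pi z_1z_2,\mu(z_1,z_2))$. A nodal Lagrangian submersion (fibration) $p:X^4\to B^2$ is a smooth map whose kernel at each regular point is a Lagrangian subspace and all of whose critical points are of focus-focus type: for $F=(f_1,f_2)$ with $\{f_1,f_2\}=0$, a critical point $m$ ($dF(m)=0$) is of focus-focus type if the Hessians of $f_1,f_2$ at $m$ are linearly independent and, in some symplectic basis $e_1,f_1,e_2,f_2$ of $T_mX$, are linear combinations of the quadratic forms $e^1\wedge f^1+e^2\wedge f^2$ and $e^1\wedge f^2-e^2\wedge f^1$. *)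

theory Defs
  imports "HOL-Analysis.Analysis"
begin

text \<open>Smooth (C-infinity) maps: there is a family of iterated Frechet derivatives
  D vs x (vs = list of directions), each of which is Frechet differentiable
  with derivative given by the next one.\<close>
definition smooth :: "('a::real_normed_vector \<Rightarrow> 'b::real_normed_vector) \<Rightarrow> bool" where
  "smooth f \<longleftrightarrow> (\<exists>D :: 'a list \<Rightarrow> 'a \<Rightarrow> 'b. D [] = f \<and>
      (\<forall>vs x. (D vs has_derivative (\<lambda>h. D (h # vs) x)) (at x)))"

definition submersion :: "('a::real_normed_vector \<Rightarrow> 'b::real_normed_vector) \<Rightarrow> bool" where
  "submersion f \<longleftrightarrow> (\<forall>p. f differentiable (at p) \<and> surj (frechet_derivative f (at p)))"

text \<open>Standard Kaehler (symplectic) form on C^2: sum of dx_k /\ dy_k.\<close>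
definition omega :: "complex \<times> complex \<Rightarrow> complex \<times> complex \<Rightarrow> real" where
  "omega u v = Im (cnj (fst u) * fst v) + Im (cnj (snd u) * snd v)"

definition mu :: "complex \<times> complex \<Rightarrow> real" where
  "mu z = pi * ((cmod (fst z))\<^sup>2 - (cmod (snd z))\<^sup>2)"

definition Hopf :: "complex \<times> complex \<Rightarrow> complex \<times> real" where
  "Hopf z = (2 * complex_of_real pi * fst z * snd z, mu z)"

text \<open>The circle action of S = R/Z (parametrised by theta in R).\<close>
definition S_act :: "real \<Rightarrow> complex \<times> complex \<Rightarrow> complex \<times> complex" where
  "S_act \<theta> z = (exp (2 * pi * \<i> * complex_of_real \<theta>) * fst z,
                 exp (- 2 * pi * \<i> * complex_of_real \<theta>) * snd z)"

definition S_invariant :: "(complex \<times> complex \<Rightarrow> 'b) \<Rightarrow> bool" where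
  "S_invariant F \<longleftrightarrow> (\<forall>\<theta> z. F (S_act \<theta> z) = F z)"

definition lagrangian_subspace :: "(complex \<times> complex) set \<Rightarrow> bool" where
  "lagrangian_subspace V \<longleftrightarrow> subspace V \<and> dim V = 2 \<and> (\<forall>u\<in>V. \<forall>v\<in>V. omega u v = 0)"

definition regular_point :: "(complex \<times> complex \<Rightarrow> real \<times> real) \<Rightarrow> complex \<times> complex \<Rightarrow> bool" where
  "regular_point F m \<longleftrightarrow> surj (frechet_derivative F (at m))"

definition hessian :: "('a::real_normed_vector \<Rightarrow> real) \<Rightarrow> 'a \<Rightarrow> 'a \<Rightarrow> 'a \<Rightarrow> real" where
  "hessian h m u v = frechet_derivative (\<lambda>x. frechet_derivative h (at x) u) (at m) v"

definition symplectic_basis :: "complex \<times> complex \<Rightarrow> complex \<times> complex \<Rightarrow> complex \<times> complex \<Rightarrow> complex \<times> complex \<Rightarrow> bool" where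
  "symplectic_basis e1 f1 e2 f2 \<longleftrightarrow> span {e1, f1, e2, f2} = UNIV \<and>
     omega e1 f1 = 1 \<and> omega e2 f2 = 1 \<and> omega e1 f2 = 0 \<and> omega e2 f1 = 0 \<and>
     omega e1 e2 = 0 \<and> omega f1 f2 = 0"

definition focus_focus :: "(complex \<times> complex \<Rightarrow> real \<times> real) \<Rightarrow> complex \<times> complex \<Rightarrow> bool" where
  "focus_focus F m \<longleftrightarrow>
     (let H1 = hessian (fst \<circ> F) m; H2 = hessian (snd \<circ> F) m in
       frechet_derivative F (at m) = (\<lambda>_. 0) \<and>
       (\<forall>a b. (\<forall>v. a * H1 v v + b * H2 v v = 0) \<longrightarrow> a = 0 \<and> b = 0) \<and>
       (\<exists>e1 f1 e2 f2. symplectic_basis e1 f1 e2 f2 \<and>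
          (\<exists>c1 d1 c2 d2. \<forall>a1 b1 a2 b2.
             let v = a1 *\<^sub>R e1 + b1 *\<^sub>R f1 + a2 *\<^sub>R e2 + b2 *\<^sub>R f2 in
               H1 v v = c1 * (a1 * b1 + a2 * b2) + d1 * (a1 * b2 - a2 * b1) \<and>
               H2 v v = c2 * (a1 * b1 + a2 * b2) + d2 * (a1 * b2 - a2 * b1))))"

definition nodal_lagrangian_fibration :: "(complex \<times> complex \<Rightarrow> real \<times> real) \<Rightarrow> bool" where
  "nodal_lagrangian_fibration F \<longleftrightarrow> smooth F \<and>
     (\<forall>m. regular_point F m \<longrightarrow> lagrangian_subspace {v. frechet_derivative F (at m) v = 0}) \<and>
     (\<forall>m. \<not> regular_point F m \<longrightarrow> focus_focus F m)"

end

theory Submission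
  imports Defs
begin

text \<open>Away from the origin the Hopf map is a submersion whose fibres are the \<open>S\<close>-orbits. Hence
  \<open>m \<noteq> 0\<close> is a regular point of \<open>F = f \<circ> Hopf\<close> iff \<open>f\<close> is a submersion at \<open>Hopf m\<close>, and then
  \<open>ker dF\<^sub>m\<close> is a 2-plane inside \<open>ker d\<mu>\<^sub>m\<close> containing the generator \<open>X\<close> of the action; since
  \<open>\<omega>(X, \<cdot>)\<close> is a multiple of \<open>d\<mu>\<^sub>m\<close>, that plane is Lagrangian. At the origin \<open>dF = 0\<close>, and as
  Hopf is quadratic the Hessians of the components of \<open>F\<close> are \<open>2 dg\<^sub>0(Hopf v)\<close> and \<open>2 \<mu>(v)\<close>.
  If \<open>dg\<^sub>0\<close> is non-zero on \<open>\<complex> \<times> 0\<close>, i.e. if \<open>f\<close> is a submersion at \<open>0\<close>, an explicit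
  symplectic basis puts them into focus-focus normal form; otherwise the first is a multiple of the
  second. As Hopf is onto, these two cases cover every point of the base.\<close>

section \<open>Linear algebra\<close>

lemma linear_euclidean_expansion:
  fixes L :: "'a::euclidean_space \<Rightarrow> 'b::real_vector"
  assumes "linear L"
  shows "L w = (\<Sum>b\<in>Basis. (w \<bullet> b) *\<^sub>R L b)"
proof -
  have "L w = L (\<Sum>b\<in>Basis. (w \<bullet> b) *\<^sub>R b)"
    by (simp add: euclidean_representation)
  also have "\<dots> = (\<Sum>b\<in>Basis. (w \<bullet> b) *\<^sub>R L b)"
    by (simp add: linear_sum[OF assms] linear_scale[OF assms])
  finally show ?thesis .
qed

lemma dim_kernel_surj:
  fixes L :: "'a::euclidean_space \<Rightarrow> 'b::euclidean_space"
  assumes L: "linear L" and "surj L"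
  shows "dim {v. L v = 0} + DIM('b) = DIM('a)"
proof -
  let ?A = "range (adjoint L)"
  have "subspace ?A"
    by (intro linear_subspace_image adjoint_linear L subspace_UNIV)
  then have "dim {v \<in> UNIV. \<forall>x\<in>?A. orthogonal x v} + dim ?A = dim (UNIV :: 'a set)"
    by (intro dim_subspace_orthogonal_to_vectors) auto
  moreover have "{v \<in> UNIV. \<forall>x\<in>?A. orthogonal x v} = {v. L v = 0}"
    using adjoint_works[OF L]
      by (auto simp: orthogonal_def inner_commute intro: inner_eq_zero_iff[THEN iffD1])
  moreover have "inj (adjoint L)"
  proof (subst linear_injective_0[OF adjoint_linear[OF L]], intro allI impI)
    fix y assume "adjoint L y = 0"
    then have "L x \<bullet> y = 0" for x
      using adjoint_works[OF L, of x y] by simp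
    then show "y = 0"
      using \<open>surj L\<close> by (metis inner_eq_zero_iff surjD)
  qed
  then have "dim ?A = DIM('b)"
    by (simp add: dim_image_eq adjoint_linear[OF L] inj_on_subset)
  ultimately show ?thesis by simp
qed

lemma isotropic_subspace_dim_2:
  fixes B :: "'a::euclidean_space \<Rightarrow> 'a \<Rightarrow> real"
  assumes B: "bilinear B" and alternating: "\<And>u. B u u = 0"
    and K: "subspace K" "dim K = 2"
    and X: "X \<in> K" "X \<noteq> 0" "\<And>v. v \<in> K \<Longrightarrow> B X v = 0"
    and uv: "u \<in> K" "v \<in> K"
  shows "B u v = 0"
proof (cases "u \<in> span {X}")
  case True
  then obtain c where "u = c *\<^sub>R X"
    by (auto simp: span_singleton)
  then show ?thesis
    using X(3)[OF uv(2)] B by (simp add: bilinear_lmul)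
next
  case False
  have "u \<noteq> X"
    using False span_base[of X "{X}"] by blast
  then have "independent {u, X}" and "card {u, X} = 2"
    using False X(2) by (auto simp: independent_insert)
  then have "K \<subseteq> span {u, X}"
    using card_ge_dim_independent[of "{u, X}" K] uv(1) X(1) K by simp
  then have "v \<in> span (insert u {X})"
    using uv(2) by auto
  then obtain a where "v - a *\<^sub>R u \<in> span {X}"
    by (auto simp: span_breakdown_eq)
  then obtain b where "v - a *\<^sub>R u = b *\<^sub>R X"
    by (auto simp: span_singleton)
  then have v: "v = a *\<^sub>R u + b *\<^sub>R X"
    by (simp add: algebra_simps)
  have "B u X = - B X u"
    using alternating[of "u + X"] alternating[of u] alternating[of X] B
    by (simp add: bilinear_ladd bilinear_radd)
  moreover have "B u v = a * B u u + b * B u X"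
    using B by (simp add: v bilinear_radd bilinear_rmul)
  ultimately show ?thesis
    using X(3)[OF uv(1)] alternating[of u] by simp
qed

lemma surj_Pair_snd_iff:
  fixes L :: "'a::real_vector \<times> real \<Rightarrow> real"
  assumes L: "linear L"
  shows "surj (\<lambda>h. (L h, snd h)) \<longleftrightarrow> (\<exists>a. L (a, 0) \<noteq> 0)"
proof
  assume su: "surj (\<lambda>h. (L h, snd h))"
  obtain h where h: "(1, 0) = (L h, snd h)"
    using surjD[OF su, of "(1, 0)"] by blast
  obtain a t where "h = (a, t)"
    by (cases h)
  with h show "\<exists>a. L (a, 0) \<noteq> 0"
    by (intro exI[of _ a]) auto
next
  assume "\<exists>a. L (a, 0) \<noteq> 0"
  then obtain a where a: "L (a, 0) \<noteq> 0" by blast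
  show "surj (\<lambda>h. (L h, snd h))"
  proof (rule surjI)
    fix y :: "real \<times> real"
    define k where "k = (fst y - L (0, snd y)) / L (a, 0)"
    have "(k *\<^sub>R a, snd y) = k *\<^sub>R (a, 0) + (0, snd y)"
      by simp
    then have "L (k *\<^sub>R a, snd y) = k * L (a, 0) + L (0, snd y)"
      by (simp only: linear_add[OF L] linear_scale[OF L] real_scaleR_def)
    also have "\<dots> = fst y"
      using a by (simp add: k_def)
    finally show "(L (k *\<^sub>R a, snd y), snd (k *\<^sub>R a, snd y)) = y"
      by (simp add: prod_eq_iff)
  qed
qed

section \<open>Smooth maps\<close>

lemma smooth_coinduct:
  assumes "f \<in> A"
    and "\<And>\<phi>. \<phi> \<in> A \<Longrightarrow> \<exists>\<phi>'. (\<forall>x. (\<phi> has_derivative (\<lambda>k. \<phi>' k x)) (at x)) \<and> (\<forall>k. \<phi>' k \<in> A)"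
  shows "smooth f"
proof -
  define D where "D ks = foldr (\<lambda>k Df x. frechet_derivative Df (at x) k) ks f" for ks
  have D_in: "D ks \<in> A" for ks
  proof (induction ks)
    case Nil
    then show ?case using assms(1) by (simp add: D_def)
  next
    case (Cons k ks)
    then obtain \<phi>' where \<phi>': "\<forall>x. (D ks has_derivative (\<lambda>k. \<phi>' k x)) (at x)" "\<forall>k. \<phi>' k \<in> A"
      using assms(2) by blast
    have "frechet_derivative (D ks) (at x) = (\<lambda>k. \<phi>' k x)" for x
      using \<phi>'(1) frechet_derivative_at by metis
    then have "D (k # ks) = \<phi>' k"
      by (simp add: D_def fun_eq_iff)
    with \<phi>'(2) show ?case by simp
  qed
  have "(D ks has_derivative (\<lambda>k. D (k # ks) x)) (at x)" for ks x
  proof -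
    have "D ks differentiable (at x)"
      using assms(2)[OF D_in] unfolding differentiable_def by blast
    then show ?thesis
      using frechet_derivative_works by (fastforce simp: D_def)
  qed
  moreover have "D [] = f" by (simp add: D_def)
  ultimately show ?thesis unfolding smooth_def by blast
qed

lemma
  assumes "smooth f"
  shows smooth_has_derivative: "(f has_derivative frechet_derivative f (at x)) (at x)"
    and smooth_directional_derivative: "smooth (\<lambda>x. frechet_derivative f (at x) k)"
proof -
  obtain D where D: "D [] = f" "\<And>ks x. (D ks has_derivative (\<lambda>h. D (h # ks) x)) (at x)"
    using assms unfolding smooth_def by blast
  have fd: "frechet_derivative f (at x) = (\<lambda>h. D [h] x)" for x
    using D frechet_derivative_at by metis
  show "(f has_derivative frechet_derivative f (at x)) (at x)"
    using D(2)[of "[]" x] by (simp add: D(1) fd)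
  show "smooth (\<lambda>x. frechet_derivative f (at x) k)"
    unfolding smooth_def
  proof (intro exI[of _ "\<lambda>ks. D (ks @ [k])"] conjI allI)
    show "D ([] @ [k]) = (\<lambda>x. frechet_derivative f (at x) k)"
      by (simp add: fd)
    fix ks x
    show "(D (ks @ [k]) has_derivative (\<lambda>h. D ((h # ks) @ [k]) x)) (at x)"
      using D(2) by simp
  qed
qed

text \<open>Derivatives of products and compositions are sums of terms of the same shape, so for them
  the coinduction is carried out up to finite sums.\<close>

inductive_set sum_closure :: "('a \<Rightarrow> 'b::real_normed_vector) set \<Rightarrow> ('a \<Rightarrow> 'b) set" for S
where
  zero: "(\<lambda>x. 0) \<in> sum_closure S"
| base: "\<phi> \<in> S \<Longrightarrow> \<phi> \<in> sum_closure S"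
| add: "\<phi> \<in> sum_closure S \<Longrightarrow> \<psi> \<in> sum_closure S \<Longrightarrow> (\<lambda>x. \<phi> x + \<psi> x) \<in> sum_closure S"

lemma sum_closure_sum:
  assumes "\<And>i. i \<in> I \<Longrightarrow> \<phi> i \<in> sum_closure S"
  shows "(\<lambda>x. \<Sum>i\<in>I. \<phi> i x) \<in> sum_closure S"
proof (cases "finite I")
  case True
  then show ?thesis
    using assms
  proof (induction I rule: finite_induct)
    case empty
    then show ?case by (simp add: sum_closure.zero)
  next
    case (insert i I)
    then show ?case
      using sum_closure.add[of "\<phi> i" S "\<lambda>x. \<Sum>j\<in>I. \<phi> j x"] by simp
  qed
qed (simp add: sum_closure.zero)

lemma smooth_coinduct_sum_closure:
  assumes "f \<in> S"
    and "\<And>\<phi>. \<phi> \<in> S \<Longrightarrow>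
      \<exists>\<phi>'. (\<forall>x. (\<phi> has_derivative (\<lambda>k. \<phi>' k x)) (at x)) \<and> (\<forall>k. \<phi>' k \<in> sum_closure S)"
  shows "smooth f"
proof (rule smooth_coinduct)
  show "f \<in> sum_closure S"
    using assms(1) by (rule sum_closure.base)
next
  fix \<phi> assume "\<phi> \<in> sum_closure S"
  then show "\<exists>\<phi>'. (\<forall>x. (\<phi> has_derivative (\<lambda>k. \<phi>' k x)) (at x)) \<and> (\<forall>k. \<phi>' k \<in> sum_closure S)"
  proof induction
    case zero
    show ?case
      by (intro exI[of _ "\<lambda>k x. 0"]) (simp add: sum_closure.zero)
  next
    case (base \<phi>)
    then show ?case by (rule assms(2))
  next
    case (add \<phi> \<psi>)
    then obtain \<phi>' \<psi>' where
      "\<forall>x. (\<phi> has_derivative (\<lambda>k. \<phi>' k x)) (at x)" "\<forall>k. \<phi>' k \<in> sum_closure S"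
      "\<forall>x. (\<psi> has_derivative (\<lambda>k. \<psi>' k x)) (at x)" "\<forall>k. \<psi>' k \<in> sum_closure S"
      by blast
    then show ?case
      by (intro exI[of _ "\<lambda>k x. \<phi>' k x + \<psi>' k x"]) (simp add: sum_closure.add)
  qed
qed

lemma smooth_const: "smooth (\<lambda>x. c)"
  unfolding smooth_def by (intro exI[of _ "\<lambda>ks x. if ks = [] then c else 0"]) simp

lemma smooth_bounded_linear:
  assumes "bounded_linear l"
  shows "smooth l"
proof -
  define D where "D ks = (case ks of [] \<Rightarrow> l | [k] \<Rightarrow> (\<lambda>x. l k) | _ \<Rightarrow> (\<lambda>x. 0))" for ks
  have "(D ks has_derivative (\<lambda>h. D (h # ks) x)) (at x)" for ks x
    using bounded_linear.has_derivative[OF assms has_derivative_ident]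
    by (cases ks; cases "tl ks") (simp_all add: D_def)
  moreover have "D [] = l"
    by (simp add: D_def)
  ultimately show ?thesis
    unfolding smooth_def by blast
qed

lemma smooth_bounded_linear_compose:
  fixes f :: "'a::real_normed_vector \<Rightarrow> 'b::real_normed_vector"
  assumes L: "bounded_linear L" and "smooth f"
  shows "smooth (\<lambda>x. L (f x))"
proof -
  define A where "A = {\<lambda>x::'a. L (u x) | u. smooth u}"
  have A_intro: "(\<lambda>x. L (u x)) \<in> A" if "smooth u" for u
    using that unfolding A_def by blast
  show ?thesis
  proof (rule smooth_coinduct[where A = A])
    show "(\<lambda>x. L (f x)) \<in> A"
      using assms(2) by (rule A_intro)
  next
    fix \<phi> assume "\<phi> \<in> A"
    then obtain u where u: "smooth u" and \<phi>: "\<phi> = (\<lambda>x. L (u x))"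
      unfolding A_def by blast
    define \<phi>' where "\<phi>' k x = L (frechet_derivative u (at x) k)" for k x
    have "(\<phi> has_derivative (\<lambda>k. \<phi>' k x)) (at x)" for x
      unfolding \<phi> \<phi>'_def by (rule bounded_linear.has_derivative[OF L smooth_has_derivative[OF u]])
    moreover have "\<phi>' k \<in> A" for k
      unfolding \<phi>'_def using A_intro[OF smooth_directional_derivative[OF u]] .
    ultimately show "\<exists>\<phi>'. (\<forall>x. (\<phi> has_derivative (\<lambda>k. \<phi>' k x)) (at x)) \<and> (\<forall>k. \<phi>' k \<in> A)"
      by blast
  qed
qed

lemma smooth_Pair:
  fixes f :: "'a::real_normed_vector \<Rightarrow> 'b::real_normed_vector" and g :: "'a \<Rightarrow> 'c::real_normed_vector"
  assumes "smooth f" and "smooth g"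
  shows "smooth (\<lambda>x. (f x, g x))"
proof -
  define A where "A = {\<lambda>x::'a. (u x :: 'b, v x :: 'c) | u v. smooth u \<and> smooth v}"
  have A_intro: "(\<lambda>x. (u x, v x)) \<in> A" if "smooth u" "smooth v" for u v
    using that unfolding A_def by blast
  show ?thesis
  proof (rule smooth_coinduct[where A = A])
    show "(\<lambda>x. (f x, g x)) \<in> A"
      using assms by (rule A_intro)
  next
    fix \<phi> assume "\<phi> \<in> A"
    then obtain u v where u: "smooth u" and v: "smooth v" and \<phi>: "\<phi> = (\<lambda>x. (u x, v x))"
      unfolding A_def by blast
    define \<phi>' where "\<phi>' k x = (frechet_derivative u (at x) k, frechet_derivative v (at x) k)" for k x
    have "(\<phi> has_derivative (\<lambda>k. \<phi>' k x)) (at x)" for x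
      unfolding \<phi> \<phi>'_def
        by (rule has_derivative_Pair[OF smooth_has_derivative[OF u] smooth_has_derivative[OF v]])
    moreover have "\<phi>' k \<in> A" for k
      unfolding \<phi>'_def
        using A_intro[OF smooth_directional_derivative[OF u] smooth_directional_derivative[OF v]] .
    ultimately show "\<exists>\<phi>'. (\<forall>x. (\<phi> has_derivative (\<lambda>k. \<phi>' k x)) (at x)) \<and> (\<forall>k. \<phi>' k \<in> A)"
      by blast
  qed
qed

lemma smooth_bilinear:
  fixes f :: "'a::real_normed_vector \<Rightarrow> 'b::real_normed_vector" and g :: "'a \<Rightarrow> 'c::real_normed_vector"
  assumes "bounded_bilinear B" and "smooth f" and "smooth g"
  shows "smooth (\<lambda>x. B (f x) (g x))"
proof -
  define S where "S = {\<lambda>x::'a. B (u x) (v x) | u v. smooth u \<and> smooth v}"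
  have S_intro: "(\<lambda>x. B (u x) (v x)) \<in> S" if "smooth u" "smooth v" for u v
    using that unfolding S_def by blast
  show ?thesis
  proof (rule smooth_coinduct_sum_closure[where S = S])
    show "(\<lambda>x. B (f x) (g x)) \<in> S"
      using assms(2,3) by (rule S_intro)
  next
    fix \<phi> assume "\<phi> \<in> S"
    then obtain u v where u: "smooth u" and v: "smooth v" and \<phi>: "\<phi> = (\<lambda>x. B (u x) (v x))"
      unfolding S_def by blast
    define \<phi>' where
      "\<phi>' k x = B (u x) (frechet_derivative v (at x) k)
        + B (frechet_derivative u (at x) k) (v x)" for k x
    have "(\<phi> has_derivative (\<lambda>k. \<phi>' k x)) (at x)" for x
      unfolding \<phi> \<phi>'_def
      by (rule bounded_bilinear.FDERIV[OF assms(1)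
          smooth_has_derivative[OF u] smooth_has_derivative[OF v]])
    moreover have "\<phi>' k \<in> sum_closure S" for k
      unfolding \<phi>'_def
      by (intro sum_closure.add sum_closure.base S_intro u v smooth_directional_derivative)
    ultimately show "\<exists>\<phi>'. (\<forall>x. (\<phi> has_derivative (\<lambda>k. \<phi>' k x)) (at x)) \<and> (\<forall>k. \<phi>' k \<in> sum_closure S)"
      by blast
  qed
qed

lemma smooth_compose:
  fixes h :: "'a::real_normed_vector \<Rightarrow> 'b::euclidean_space" and q :: "'b \<Rightarrow> 'c::real_normed_vector"
  assumes "smooth q" and "smooth h"
  shows "smooth (\<lambda>x. q (h x))"
proof -
  define S where "S = {\<lambda>x. p x *\<^sub>R r (h x) | p (r :: 'b \<Rightarrow> 'c). smooth p \<and> smooth r}"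
  have S_intro: "(\<lambda>x. p x *\<^sub>R r (h x)) \<in> S" if "smooth p" "smooth r" for p r
    using that unfolding S_def by blast
  show ?thesis
  proof (rule smooth_coinduct_sum_closure[where S = S])
    show "(\<lambda>x. q (h x)) \<in> S"
      using S_intro[OF smooth_const assms(1), of 1] by simp
  next
    fix \<phi> assume "\<phi> \<in> S"
    then obtain p r where p: "smooth p" and r: "smooth r" and \<phi>: "\<phi> = (\<lambda>x. p x *\<^sub>R r (h x))"
      unfolding S_def by blast
    define \<phi>' where "\<phi>' k x =
      (\<Sum>b\<in>Basis. (p x * (frechet_derivative h (at x) k \<bullet> b)) *\<^sub>R frechet_derivative r (at (h x)) b)
      + frechet_derivative p (at x) k *\<^sub>R r (h x)" for k x
    have "(\<phi> has_derivative (\<lambda>k. \<phi>' k x)) (at x)" for x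
    proof -
      have "((\<lambda>x. r (h x))
          has_derivative (\<lambda>k. frechet_derivative r (at (h x)) (frechet_derivative h (at x) k))) (at x)"
        by (rule has_derivative_compose[OF smooth_has_derivative[OF assms(2)]
            smooth_has_derivative[OF r]])
      from has_derivative_scaleR[OF smooth_has_derivative[OF p] this]
      have "(\<phi> has_derivative (\<lambda>k. p x *\<^sub>R frechet_derivative r (at (h x))
          (frechet_derivative h (at x) k)
          + frechet_derivative p (at x) k *\<^sub>R r (h x))) (at x)"
        unfolding \<phi> .
      moreover have "p x *\<^sub>R frechet_derivative r (at (h x)) w
          = (\<Sum>b\<in>Basis. (p x * (w \<bullet> b)) *\<^sub>R frechet_derivative r (at (h x)) b)" for w
        by (subst linear_euclidean_expansion[OF has_derivative_linear[OF smooth_has_derivative[OF r]]])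
          (simp add: scaleR_sum_right)
      ultimately show ?thesis
        by (simp add: \<phi>'_def)
    qed
    moreover have "\<phi>' k \<in> sum_closure S" for k
    proof -
      have "smooth (\<lambda>x. p x * (frechet_derivative h (at x) k \<bullet> b))" for b
        by (intro smooth_bilinear[OF bounded_bilinear_mult] p smooth_directional_derivative
            smooth_bounded_linear_compose[OF bounded_linear_inner_left] assms(2))
      from S_intro[OF this smooth_directional_derivative[OF r]]
      have "(\<lambda>x. (p x * (frechet_derivative h (at x) k \<bullet> b))
          *\<^sub>R frechet_derivative r (at (h x)) b) \<in> S"
        for b .
      moreover have "(\<lambda>x. frechet_derivative p (at x) k *\<^sub>R r (h x)) \<in> S"
        using S_intro[OF smooth_directional_derivative[OF p] r] .
      ultimately show ?thesis
        unfolding \<phi>'_def by (intro sum_closure.add sum_closure_sum sum_closure.base)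
    qed
    ultimately show "\<exists>\<phi>'. (\<forall>x. (\<phi> has_derivative (\<lambda>k. \<phi>' k x)) (at x)) \<and> (\<forall>k. \<phi>' k \<in> sum_closure S)"
      by blast
  qed
qed

lemma smooth_submersion_iff:
  assumes "smooth q"
  shows "submersion q \<longleftrightarrow> (\<forall>p. surj (frechet_derivative q (at p)))"
  using smooth_has_derivative[OF assms] by (auto simp: submersion_def differentiable_def)

section \<open>The Hopf map\<close>

definition dmu :: "complex \<times> complex \<Rightarrow> complex \<times> complex \<Rightarrow> real" where
  "dmu x u = 2 * pi * (fst x \<bullet> fst u - snd x \<bullet> snd u)"

definition dHopf :: "complex \<times> complex \<Rightarrow> complex \<times> complex \<Rightarrow> complex \<times> real" where
  "dHopf x u = (2 * complex_of_real pi * (fst u * snd x + fst x * snd u), dmu x u)"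

lemma Hopf_eq_bilinear:
  "Hopf z = ((2 * complex_of_real pi * fst z) * snd z, (pi *\<^sub>R fst z, - pi *\<^sub>R snd z) \<bullet> z)"
  by (simp add: Hopf_def mu_def inner_prod_def dot_square_norm algebra_simps)

lemma Hopf_has_derivative: "(Hopf has_derivative dHopf x) (at x)"
  unfolding Hopf_eq_bilinear[abs_def]
  by (auto intro!: derivative_eq_intros
      simp: dHopf_def dmu_def fun_eq_iff inner_prod_def algebra_simps inner_commute)

lemma smooth_Hopf: "smooth Hopf"
proof -
  have "smooth (\<lambda>z. (2 * complex_of_real pi * fst z) * snd z)"
    by (intro smooth_bilinear[OF bounded_bilinear_mult] smooth_bounded_linear bounded_linear_intros)
  moreover have "smooth (\<lambda>z. (pi *\<^sub>R fst z, - pi *\<^sub>R snd z) \<bullet> z)"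
    by (intro smooth_bilinear[OF bounded_bilinear_inner] smooth_bounded_linear bounded_linear_intros)
  ultimately show ?thesis
    unfolding Hopf_eq_bilinear[abs_def] by (rule smooth_Pair)
qed

lemma Hopf_0 [simp]: "Hopf 0 = 0"
  by (simp add: Hopf_def mu_def zero_prod_def)

lemma snd_Hopf [simp]: "snd (Hopf z) = mu z"
  by (simp add: Hopf_def)

lemma dHopf_0 [simp]: "dHopf 0 = (\<lambda>_. 0)"
  by (simp add: dHopf_def dmu_def zero_prod_def fun_eq_iff)

lemma dHopf_diag: "dHopf v v = 2 *\<^sub>R Hopf v"
  by (simp add: dHopf_def dmu_def Hopf_def mu_def dot_square_norm algebra_simps scaleR_conv_of_real)

lemma linear_dHopf_basepoint: "linear (\<lambda>x. dHopf x u)"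
  by (rule linearI) (auto simp: dHopf_def dmu_def algebra_simps)

lemma Hopf_S_act: "Hopf (S_act \<theta> z) = Hopf z"
proof -
  define e where "e = exp (2 * pi * \<i> * complex_of_real \<theta>)"
  define e' where "e' = exp (- 2 * pi * \<i> * complex_of_real \<theta>)"
  have "e * e' = 1"
    by (simp add: e_def e'_def flip: exp_add)
  moreover have "cmod e = 1" "cmod e' = 1"
    by (simp_all add: e_def e'_def)
  moreover have "S_act \<theta> z = (e * fst z, e' * snd z)"
    by (simp add: S_act_def e_def e'_def)
  moreover have "2 * complex_of_real pi * (e * fst z) * (e' * snd z)
      = (e * e') * (2 * complex_of_real pi * fst z * snd z)"
    by (simp only: ac_simps)
  ultimately show ?thesis
    by (simp add: Hopf_def mu_def norm_mult)
qed

lemma Hopf_surj: "surj Hopf"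
  unfolding surj_def
proof
  fix p :: "complex \<times> real"
  obtain w t where p: "p = (w, t)" by (cases p)
  define r where "r = cmod w / (2 * pi)"
  define s where "s = t / pi"
  define R where "R = sqrt (s\<^sup>2 + 4 * r\<^sup>2)"
  have "\<bar>s\<bar> \<le> R"
    unfolding R_def by (rule real_le_rsqrt) simp
  text \<open>\<open>a, b \<ge> 0\<close> solve \<open>a * b = r\<close> and \<open>a\<^sup>2 - b\<^sup>2 = s\<close>.\<close>
  define a where "a = sqrt ((R + s) / 2)"
  define b where "b = sqrt ((R - s) / 2)"
  have a2: "a\<^sup>2 = (R + s) / 2" and b2: "b\<^sup>2 = (R - s) / 2"
    using \<open>\<bar>s\<bar> \<le> R\<close> by (simp_all add: a_def b_def)
  have "a * b = sqrt ((R + s) / 2 * ((R - s) / 2))"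
    unfolding a_def b_def by (rule real_sqrt_mult[symmetric])
  also have "(R + s) / 2 * ((R - s) / 2) = r\<^sup>2"
    by (simp add: R_def field_simps power2_eq_square)
  finally have ab: "a * b = r"
    by (simp add: r_def)
  define u where "u = (if w = 0 then 1 else w / complex_of_real (cmod w))"
  have "cmod u = 1"
    by (simp add: u_def norm_divide)
  have "2 * complex_of_real pi * complex_of_real (a * b) * u = w"
    by (simp add: ab r_def u_def)
  moreover have "pi * (a\<^sup>2 - b\<^sup>2) = t"
    by (simp add: a2 b2 s_def field_simps)
  ultimately have "Hopf (complex_of_real a, complex_of_real b * u) = p"
    using \<open>cmod u = 1\<close> by (simp add: Hopf_def mu_def p norm_mult mult_ac)
  then show "\<exists>z. p = Hopf z"
    by metis
qed

lemma dHopf_surj: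
  assumes "m \<noteq> 0"
  shows "surj (dHopf m)"
  unfolding surj_def
proof
  fix p :: "complex \<times> real"
  obtain w t where p: "p = (w, t)" by (cases p)
  define N where "N = (cmod (fst m))\<^sup>2 + (cmod (snd m))\<^sup>2"
  have "fst m \<noteq> 0 \<or> snd m \<noteq> 0"
    using assms by (simp add: prod_eq_iff)
  then have "N > 0"
    by (auto simp: N_def intro: add_pos_nonneg add_nonneg_pos)
  have N: "complex_of_real N = fst m * cnj (fst m) + snd m * cnj (snd m)"
    unfolding N_def of_real_add complex_norm_square ..
  define c where "c = w / (2 * complex_of_real pi * complex_of_real N)"
  define s where "s = t / (2 * pi * N)"
  text \<open>Moving along \<open>(fst m, - snd m)\<close> changes only \<open>mu\<close>, along \<open>(cnj (snd m), cnj (fst m))\<close> only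
    the product of the coordinates.\<close>
  define v where
    "v = (complex_of_real s * fst m + c * cnj (snd m), - complex_of_real s * snd m + c * cnj (fst m))"
  have "fst (dHopf m v) = 2 * complex_of_real pi * c * complex_of_real N"
    by (simp add: dHopf_def v_def N algebra_simps)
  moreover have "snd (dHopf m v) = 2 * pi * s * N"
    unfolding dHopf_def dmu_def v_def N_def cmod_power2
    by (simp add: inner_complex_def algebra_simps power2_eq_square)
  ultimately have "dHopf m v = p"
    using \<open>N > 0\<close> by (simp add: p c_def s_def prod_eq_iff)
  then show "\<exists>v. p = dHopf m v"
    by metis
qed

text \<open>\<open>2 * pi *\<^sub>R S_generator m\<close> is the derivative of \<open>\<lambda>\<theta>. S_act \<theta> m\<close> at \<open>\<theta> = 0\<close>.\<close>

definition S_generator :: "complex \<times> complex \<Rightarrow> complex \<times> complex" where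
  "S_generator m = (\<i> * fst m, - \<i> * snd m)"

lemma S_generator_eq_0_iff: "S_generator m = 0 \<longleftrightarrow> m = 0"
  by (simp add: S_generator_def prod_eq_iff)

lemma dHopf_S_generator: "dHopf m (S_generator m) = 0"
  by (simp add: dHopf_def dmu_def S_generator_def inner_complex_def algebra_simps zero_prod_def)

lemma omega_S_generator: "omega (S_generator m) v = - dmu m v / (2 * pi)"
  by (simp add: omega_def dmu_def S_generator_def inner_complex_def)

lemma bilinear_omega: "bilinear omega"
  by (auto simp: bilinear_def linear_iff omega_def scaleR_conv_of_real algebra_simps)

lemma omega_self: "omega u u = 0"
  by (simp add: omega_def)

section \<open>Hessians and the focus-focus normal form\<close>

text \<open>As \<open>dh\<close> is linear in the base point, \<open>dh 0 = 0\<close>, so the term involving the second derivative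
  of \<open>g\<close> drops out of the second-order chain rule at \<open>0\<close>.\<close>

lemma hessian_compose_quadratic:
  fixes g :: "'b::euclidean_space \<Rightarrow> real" and h :: "'a::euclidean_space \<Rightarrow> 'b"
  assumes g: "smooth g"
    and h: "\<And>x. (h has_derivative dh x) (at x)"
    and dh: "\<And>u. linear (\<lambda>x. dh x u)"
  shows "hessian (\<lambda>x. g (h x)) 0 u v = frechet_derivative g (at (h 0)) (dh v u)"
proof -
  define G where "G b y = frechet_derivative g (at y) b" for b y
  have dg: "linear (frechet_derivative g (at y))" for y
    using has_derivative_linear[OF smooth_has_derivative[OF g]] .
  have "frechet_derivative (\<lambda>x. g (h x)) (at x) u = frechet_derivative g (at (h x)) (dh x u)" for x
    using frechet_derivative_at[OF has_derivative_compose[OF h smooth_has_derivative[OF g]], symmetric]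
      by simp
  also have "\<dots> x = (\<Sum>b\<in>Basis. (dh x u \<bullet> b) * G b (h x))" for x
    by (subst linear_euclidean_expansion[OF dg]) (simp add: G_def)
  finally have "hessian (\<lambda>x. g (h x)) 0 u v
      = frechet_derivative (\<lambda>x. \<Sum>b\<in>Basis. (dh x u \<bullet> b) * G b (h x)) (at 0) v"
    by (simp add: hessian_def)
  also have "\<dots> = (\<Sum>b\<in>Basis. (dh v u \<bullet> b) * G b (h 0))"
  proof -
    have "((\<lambda>x. dh x u \<bullet> b) has_derivative (\<lambda>v. dh v u \<bullet> b)) (at 0)" for b
      using dh[of u] by (intro bounded_linear.has_derivative[OF _ has_derivative_ident]
          bounded_linear_intros)
        (simp add: linear_conv_bounded_linear)
    moreover have "((\<lambda>x. G b (h x)) has_derivative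
        (\<lambda>v. frechet_derivative (G b) (at (h 0)) (dh 0 v))) (at 0)" for b
      unfolding G_def
      by (rule has_derivative_compose[OF h
          smooth_has_derivative[OF smooth_directional_derivative[OF g]]])
    ultimately have "((\<lambda>x. \<Sum>b\<in>Basis. (dh x u \<bullet> b) * G b (h x)) has_derivative
        (\<lambda>v. \<Sum>b\<in>Basis. (dh 0 u \<bullet> b) * frechet_derivative (G b) (at (h 0)) (dh 0 v)
          + (dh v u \<bullet> b) * G b (h 0))) (at 0)"
      by (intro has_derivative_sum has_derivative_mult)
    moreover have "dh 0 u = 0"
      using linear_0[OF dh] .
    ultimately show ?thesis
      by (simp add: frechet_derivative_at[symmetric])
  qed
  also have "\<dots> = frechet_derivative g (at (h 0)) (dh v u)"
    by (subst linear_euclidean_expansion[OF dg]) (simp add: G_def)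
  finally show ?thesis .
qed

lemma focus_focusI:
  assumes "frechet_derivative F (at m) = (\<lambda>_. 0)"
    and "symplectic_basis e1 f1 e2 f2"
    and "\<And>a1 b1 a2 b2. let v = a1 *\<^sub>R e1 + b1 *\<^sub>R f1 + a2 *\<^sub>R e2 + b2 *\<^sub>R f2 in
      hessian (fst \<circ> F) m v v = c1 * (a1 * b1 + a2 * b2) + d1 * (a1 * b2 - a2 * b1) \<and>
      hessian (snd \<circ> F) m v v = c2 * (a1 * b1 + a2 * b2) + d2 * (a1 * b2 - a2 * b1)"
    and "c1 * d2 \<noteq> c2 * d1"
  shows "focus_focus F m"
proof -
  have "a = 0 \<and> b = 0"
    if "\<forall>v. a * hessian (fst \<circ> F) m v v + b * hessian (snd \<circ> F) m v v = 0" for a b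
  proof -
    have "a * c1 + b * c2 = 0"
      using that[rule_format, of "e1 + f1"] assms(3)[of 1 1 0 0] by (simp add: Let_def)
    moreover have "a * d1 + b * d2 = 0"
      using that[rule_format, of "e1 + f2"] assms(3)[of 1 0 0 1] by (simp add: Let_def)
    ultimately have "a * (c1 * d2 - c2 * d1) = 0 \<and> b * (c1 * d2 - c2 * d1) = 0"
      by algebra
    then show ?thesis
      using assms(4) by simp
  qed
  then show ?thesis
    using assms(1-3) unfolding focus_focus_def Let_def by blast
qed

lemma symplectic_basis_focus_focus:
  assumes "c\<^sup>2 + s\<^sup>2 = 1"
  defines "\<zeta> \<equiv> Complex c s"
  shows "symplectic_basis (\<zeta>, \<i>) (\<i> * \<zeta> / 2, - 1 / 2) (\<i> * \<zeta>, 1) (- \<zeta> / 2, \<i> / 2)"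
proof -
  have "z \<in> span {(\<zeta>, \<i>), (\<i> * \<zeta> / 2, - 1 / 2), (\<i> * \<zeta>, 1), (- \<zeta> / 2, \<i> / 2)}" for z
  proof -
    obtain x1 x2 y1 y2 where z: "z = (Complex x1 x2, Complex y1 y2)"
      by (metis complex.exhaust prod.exhaust)
    have "z = ((x1 * c + x2 * s + y2) / 2) *\<^sub>R (\<zeta>, \<i>) + (x2 * c - x1 * s - y1) *\<^sub>R (\<i> * \<zeta> / 2, - 1 / 2)
        + ((x2 * c - x1 * s + y1) / 2) *\<^sub>R (\<i> * \<zeta>, 1) + (y2 - (x1 * c + x2 * s)) *\<^sub>R (- \<zeta> / 2, \<i> / 2)"
      using assms(1) unfolding z \<zeta>_def
      by (simp add: prod_eq_iff complex_eq_iff scaleR_conv_of_real field_simps) algebra+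
    then show ?thesis
      by (metis span_add span_base span_scale insertCI)
  qed
  moreover have "omega (\<zeta>, \<i>) (\<i> * \<zeta> / 2, - 1 / 2) = 1" "omega (\<i> * \<zeta>, 1) (- \<zeta> / 2, \<i> / 2) = 1"
    "omega (\<zeta>, \<i>) (- \<zeta> / 2, \<i> / 2) = 0" "omega (\<i> * \<zeta>, 1) (\<i> * \<zeta> / 2, - 1 / 2) = 0"
    "omega (\<zeta>, \<i>) (\<i> * \<zeta>, 1) = 0" "omega (\<i> * \<zeta> / 2, - 1 / 2) (- \<zeta> / 2, \<i> / 2) = 0"
    using assms(1) unfolding \<zeta>_def by (simp_all add: omega_def field_simps) algebra+
  ultimately show ?thesis
    unfolding symplectic_basis_def by blast
qed

lemma Hopf_focus_focus_coordinates:
  fixes c s a1 b1 a2 b2 :: real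
  assumes "c\<^sup>2 + s\<^sup>2 = 1"
  defines "\<zeta> \<equiv> Complex c s"
  defines "v \<equiv> a1 *\<^sub>R (\<zeta>, \<i>) + b1 *\<^sub>R (\<i> * \<zeta> / 2, - 1 / 2)
    + a2 *\<^sub>R (\<i> * \<zeta>, 1) + b2 *\<^sub>R (- \<zeta> / 2, \<i> / 2)"
  shows "\<zeta> \<bullet> fst (Hopf v) = - 2 * pi * (a1 * b1 + a2 * b2)"
    and "mu v = - 2 * pi * (a1 * b2 - a2 * b1)"
  using assms(1) unfolding v_def \<zeta>_def
  by (simp_all add: Hopf_def mu_def cmod_power2 inner_complex_def scaleR_conv_of_real
      field_simps) algebra+

section \<open>The map f \<circ> Hopf\<close>

lemma frechet_derivative_graph:
  assumes "smooth g"
  shows "frechet_derivative (\<lambda>p. (g p, snd p)) (at p) = (\<lambda>h. (frechet_derivative g (at p) h, snd h))"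
  by (rule frechet_derivative_at[symmetric],
      rule has_derivative_Pair[OF smooth_has_derivative[OF assms]
          has_derivative_snd[OF has_derivative_ident]])

lemma smooth_graph: "smooth g \<Longrightarrow> smooth (\<lambda>p. (g p, snd p))"
  by (rule smooth_Pair[OF _ smooth_bounded_linear[OF bounded_linear_snd]])

lemma frechet_derivative_compose_Hopf:
  assumes "smooth q"
  shows "frechet_derivative (q \<circ> Hopf) (at m) = frechet_derivative q (at (Hopf m)) \<circ> dHopf m"
  by (rule frechet_derivative_at[symmetric],
      rule diff_chain_at[OF Hopf_has_derivative smooth_has_derivative[OF assms]])

lemma frechet_derivative_compose_Hopf_0:
  assumes "smooth q"
  shows "frechet_derivative (q \<circ> Hopf) (at 0) = (\<lambda>_. 0)"
  unfolding frechet_derivative_compose_Hopf[OF assms]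
  using linear_0[OF has_derivative_linear[OF smooth_has_derivative[OF assms]]] by (simp add: comp_def)

lemma regular_point_compose_Hopf_iff:
  fixes q :: "complex \<times> real \<Rightarrow> real \<times> real"
  assumes "smooth q"
  shows "regular_point (q \<circ> Hopf) m \<longleftrightarrow> m \<noteq> 0 \<and> surj (frechet_derivative q (at (Hopf m)))"
proof (cases "m = 0")
  case True
  then have "range (frechet_derivative (q \<circ> Hopf) (at m)) = {0}"
    by (simp add: frechet_derivative_compose_Hopf_0[OF assms])
  moreover have "(1, 0) \<notin> {0 :: real \<times> real}"
    by (simp add: zero_prod_def)
  ultimately show ?thesis
    using True unfolding regular_point_def by (metis UNIV_I)
next
  case False
  have "range (frechet_derivative (q \<circ> Hopf) (at m)) = range (frechet_derivative q (at (Hopf m)))"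
    unfolding frechet_derivative_compose_Hopf[OF assms] image_comp[symmetric]
    using dHopf_surj[OF False] by simp
  then show ?thesis
    using False unfolding regular_point_def by simp
qed

lemma lagrangian_kernel_graph_Hopf:
  assumes g: "smooth g" and regular: "regular_point ((\<lambda>p. (g p, snd p)) \<circ> Hopf) m"
  shows "lagrangian_subspace {v. frechet_derivative ((\<lambda>p. (g p, snd p)) \<circ> Hopf) (at m) v = 0}"
proof -
  define F where "F = (\<lambda>p. (g p, snd p)) \<circ> Hopf"
  define K where "K = {v. frechet_derivative F (at m) v = 0}"
  have q: "smooth (\<lambda>p. (g p, snd p))"
    using g by (rule smooth_graph)
  have dq: "linear (frechet_derivative (\<lambda>p. (g p, snd p)) (at p))" for p
    using has_derivative_linear[OF smooth_has_derivative[OF q]] .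
  have dF: "frechet_derivative F (at m) = frechet_derivative (\<lambda>p. (g p, snd p)) (at (Hopf m)) \<circ> dHopf m"
    unfolding F_def by (rule frechet_derivative_compose_Hopf[OF q])
  have snd_dF: "snd (frechet_derivative F (at m) v) = dmu m v" for v
    by (simp add: dF frechet_derivative_graph[OF g] dHopf_def)
  have lin: "linear (frechet_derivative F (at m))"
    unfolding dF by (intro linear_compose has_derivative_linear[OF Hopf_has_derivative] dq)
  have "subspace K"
    unfolding K_def by (rule linear_subspace_kernel[OF lin])
  moreover have "dim K = 2"
    using dim_kernel_surj[OF lin] regular by (simp add: K_def F_def regular_point_def)
  moreover have "m \<noteq> 0"
    using regular regular_point_compose_Hopf_iff[OF q] by blast
  moreover have "S_generator m \<in> K"
    by (simp add: K_def dF dHopf_S_generator linear_0[OF dq])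
  moreover have "omega (S_generator m) v = 0" if "v \<in> K" for v
    using that snd_dF[of v] by (simp add: K_def omega_S_generator)
  ultimately have "omega u v = 0" if "u \<in> K" "v \<in> K" for u v
    using isotropic_subspace_dim_2[OF bilinear_omega omega_self] that by (metis S_generator_eq_0_iff)
  with \<open>subspace K\<close> \<open>dim K = 2\<close> show ?thesis
    unfolding lagrangian_subspace_def K_def F_def by blast
qed

lemma
  assumes "smooth g"
  shows hessian_fst_graph_Hopf:
      "hessian (fst \<circ> ((\<lambda>p. (g p, snd p)) \<circ> Hopf)) 0 v v = 2 * frechet_derivative g (at 0) (Hopf v)"
    and hessian_snd_graph_Hopf: "hessian (snd \<circ> ((\<lambda>p. (g p, snd p)) \<circ> Hopf)) 0 v v = 2 * mu v"
proof -
  have "hessian (fst \<circ> ((\<lambda>p. (g p, snd p)) \<circ> Hopf)) 0 v v = frechet_derivative g (at 0) (dHopf v v)"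
    using hessian_compose_quadratic[OF assms Hopf_has_derivative linear_dHopf_basepoint]
      by (simp add: comp_def)
  then show "hessian (fst \<circ> ((\<lambda>p. (g p, snd p)) \<circ> Hopf)) 0 v v
      = 2 * frechet_derivative g (at 0) (Hopf v)"
    by (simp add: dHopf_diag linear_scale[OF has_derivative_linear[OF smooth_has_derivative[OF assms]]])
  have "frechet_derivative snd (at y) = snd" for y :: "complex \<times> real"
    by (rule frechet_derivative_at[symmetric],
        rule bounded_linear.has_derivative[OF bounded_linear_snd has_derivative_ident])
  then show "hessian (snd \<circ> ((\<lambda>p. (g p, snd p)) \<circ> Hopf)) 0 v v = 2 * mu v"
    using hessian_compose_quadratic[OF smooth_bounded_linear[OF bounded_linear_snd] Hopf_has_derivative
        linear_dHopf_basepoint]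
    by (simp add: comp_def dHopf_diag)
qed

lemma focus_focus_graph_Hopf:
  assumes g: "smooth g" and "frechet_derivative g (at 0) (a, 0) \<noteq> 0"
  shows "focus_focus ((\<lambda>p. (g p, snd p)) \<circ> Hopf) 0"
proof -
  define G where "G = frechet_derivative g (at 0)"
  have G: "linear G"
    unfolding G_def by (rule has_derivative_linear[OF smooth_has_derivative[OF g]])
  define \<alpha> where "\<alpha> = fst (adjoint G 1)"
  define \<beta> where "\<beta> = snd (adjoint G 1)"
  have G_inner: "G (w, t) = w \<bullet> \<alpha> + t * \<beta>" for w t
    using adjoint_works[OF G, of "(w, t)" 1] by (simp add: \<alpha>_def \<beta>_def inner_prod_def inner_commute)
  with assms(2) have "\<alpha> \<noteq> 0"
    by (auto simp: G_def)
  text \<open>The symplectic basis is adapted to the direction \<open>Complex c s\<close> of \<open>\<alpha>\<close>.\<close>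
  define n where "n = cmod \<alpha>"
  define c where "c = Re \<alpha> / n"
  define s where "s = Im \<alpha> / n"
  have "n > 0"
    using \<open>\<alpha> \<noteq> 0\<close> by (simp add: n_def)
  have cs: "c\<^sup>2 + s\<^sup>2 = 1" and \<alpha>: "\<alpha> = n *\<^sub>R Complex c s"
    using \<open>n > 0\<close>
    by (simp_all add: c_def s_def n_def cmod_power2 complex_eq_iff
        power_divide add_divide_distrib[symmetric])
  show ?thesis
  proof (rule focus_focusI[OF frechet_derivative_compose_Hopf_0[OF smooth_graph[OF g]]
        symplectic_basis_focus_focus[OF cs]])
    fix a1 b1 a2 b2 :: real
    define v where "v = a1 *\<^sub>R (Complex c s, \<i>) + b1 *\<^sub>R (\<i> * Complex c s / 2, - 1 / 2)
      + a2 *\<^sub>R (\<i> * Complex c s, 1) + b2 *\<^sub>R (- Complex c s / 2, \<i> / 2)"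
    have "(fst (Hopf v), mu v) = Hopf v"
      by (simp add: prod_eq_iff)
    then have "G (Hopf v) = n * (Complex c s \<bullet> fst (Hopf v)) + mu v * \<beta>"
      using G_inner[of "fst (Hopf v)" "mu v"] \<alpha> by (simp add: inner_commute)
    then show "let v = a1 *\<^sub>R (Complex c s, \<i>) + b1 *\<^sub>R (\<i> * Complex c s / 2, - 1 / 2)
          + a2 *\<^sub>R (\<i> * Complex c s, 1) + b2 *\<^sub>R (- Complex c s / 2, \<i> / 2) in
        hessian (fst \<circ> ((\<lambda>p. (g p, snd p)) \<circ> Hopf)) 0 v v
          = (- 4 * pi * n) * (a1 * b1 + a2 * b2) + (- 4 * pi * \<beta>) * (a1 * b2 - a2 * b1) \<and>
        hessian (snd \<circ> ((\<lambda>p. (g p, snd p)) \<circ> Hopf)) 0 v v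
          = 0 * (a1 * b1 + a2 * b2) + (- 4 * pi) * (a1 * b2 - a2 * b1)"
      using Hopf_focus_focus_coordinates[OF cs, of a1 b1 a2 b2]
      unfolding Let_def v_def[symmetric]
          hessian_fst_graph_Hopf[OF g] hessian_snd_graph_Hopf[OF g] G_def[symmetric]
      by (simp add: algebra_simps)
  next
    show "(- 4 * pi * n) * (- 4 * pi) \<noteq> 0 * (- 4 * pi * \<beta>)"
      using \<open>n > 0\<close> by simp
  qed
qed

lemma focus_focus_graph_Hopf_iff:
  assumes g: "smooth g"
  shows "focus_focus ((\<lambda>p. (g p, snd p)) \<circ> Hopf) 0 \<longleftrightarrow>
    surj (frechet_derivative (\<lambda>p. (g p, snd p)) (at 0))"
proof -
  define F where "F = (\<lambda>p. (g p, snd p)) \<circ> Hopf"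
  define G where "G = frechet_derivative g (at 0)"
  have G: "linear G"
    unfolding G_def by (rule has_derivative_linear[OF smooth_has_derivative[OF g]])
  have "focus_focus F 0 \<longleftrightarrow> (\<exists>a. G (a, 0) \<noteq> 0)"
  proof
    assume ff: "focus_focus F 0"
    show "\<exists>a. G (a, 0) \<noteq> 0"
    proof (rule ccontr)
      assume "\<not> (\<exists>a. G (a, 0) \<noteq> 0)"
      then have G0: "G (w, t) = t * G (0, 1)" for w t
        using linear_add[OF G, of "(w, 0)" "t *\<^sub>R (0, 1)"] linear_scale[OF G, of t "(0, 1)"] by simp
      have "G (Hopf v) = mu v * G (0, 1)" for v
        using G0[of "fst (Hopf v)" "snd (Hopf v)"] by (simp add: Hopf_def)
      then have "1 * hessian (fst \<circ> F) 0 v v + (- G (0, 1)) * hessian (snd \<circ> F) 0 v v = 0" for v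
        by (simp add: F_def hessian_fst_graph_Hopf[OF g] hessian_snd_graph_Hopf[OF g] G_def)
      with ff show False
        unfolding focus_focus_def Let_def by (metis zero_neq_one)
    qed
  next
    assume "\<exists>a. G (a, 0) \<noteq> 0"
    then show "focus_focus F 0"
      unfolding F_def G_def using focus_focus_graph_Hopf[OF g] by blast
  qed
  also have "\<dots> \<longleftrightarrow> surj (frechet_derivative (\<lambda>p. (g p, snd p)) (at 0))"
    unfolding frechet_derivative_graph[OF g] G_def using surj_Pair_snd_iff[OF G[unfolded G_def]] by simp
  finally show ?thesis
    unfolding F_def .
qed

lemma S_invariant_compose_Hopf: "S_invariant (q \<circ> Hopf)"
  by (simp add: S_invariant_def Hopf_S_act)

lemma nodal_lagrangian_fibration_graph_Hopf:
  assumes g: "smooth g" and surj: "\<And>p. surj (frechet_derivative (\<lambda>p. (g p, snd p)) (at p))"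
  shows "nodal_lagrangian_fibration ((\<lambda>p. (g p, snd p)) \<circ> Hopf)"
  unfolding nodal_lagrangian_fibration_def
proof (intro conjI allI impI)
  show "smooth ((\<lambda>p. (g p, snd p)) \<circ> Hopf)"
    using smooth_compose[OF smooth_graph[OF g] smooth_Hopf] by (simp add: comp_def)
next
  fix m assume "regular_point ((\<lambda>p. (g p, snd p)) \<circ> Hopf) m"
  then show "lagrangian_subspace {v. frechet_derivative ((\<lambda>p. (g p, snd p)) \<circ> Hopf) (at m) v = 0}"
    by (rule lagrangian_kernel_graph_Hopf[OF g])
next
  fix m assume "\<not> regular_point ((\<lambda>p. (g p, snd p)) \<circ> Hopf) m"
  then show "focus_focus ((\<lambda>p. (g p, snd p)) \<circ> Hopf) m"
    using surj regular_point_compose_Hopf_iff[OF smooth_graph[OF g]] focus_focus_graph_Hopf_iff[OF g]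
    by auto
qed

theorem lemma7p19:
  fixes g :: "complex \<times> real \<Rightarrow> real"
  assumes "smooth g"
  shows "(nodal_lagrangian_fibration ((\<lambda>p. (g p, snd p)) \<circ> Hopf) \<and>
          S_invariant ((\<lambda>p. (g p, snd p)) \<circ> Hopf) \<and>
          {m. \<not> regular_point ((\<lambda>p. (g p, snd p)) \<circ> Hopf) m} = {0})
         \<longleftrightarrow> submersion (\<lambda>p. (g p, snd p))"
proof -
  let ?q = "\<lambda>p. (g p, snd p)"
  have q: "smooth ?q"
    using assms by (rule smooth_graph)
  have submersion: "submersion ?q \<longleftrightarrow> (\<forall>m. surj (frechet_derivative ?q (at (Hopf m))))"
    unfolding smooth_submersion_iff[OF q] by (metis Hopf_surj surjD)
  note regular = regular_point_compose_Hopf_iff[OF q]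
  show ?thesis
  proof
    assume "nodal_lagrangian_fibration (?q \<circ> Hopf) \<and> S_invariant (?q \<circ> Hopf) \<and>
      {m. \<not> regular_point (?q \<circ> Hopf) m} = {0}"
    then have nodal: "nodal_lagrangian_fibration (?q \<circ> Hopf)"
      and critical: "\<And>m. \<not> regular_point (?q \<circ> Hopf) m \<longleftrightarrow> m = 0"
      by auto
    have "surj (frechet_derivative ?q (at (Hopf m)))" for m
    proof (cases "m = 0")
      case True
      then show ?thesis
        using nodal critical focus_focus_graph_Hopf_iff[OF assms]
        unfolding nodal_lagrangian_fibration_def by auto
    qed (use critical regular in blast)
    then show "submersion ?q"
      unfolding submersion by blast
  next
    assume "submersion ?q"
    then have surj: "surj (frechet_derivative ?q (at p))" for p
      unfolding smooth_submersion_iff[OF q] by blast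
    then show "nodal_lagrangian_fibration (?q \<circ> Hopf) \<and> S_invariant (?q \<circ> Hopf) \<and>
      {m. \<not> regular_point (?q \<circ> Hopf) m} = {0}"
      using nodal_lagrangian_fibration_graph_Hopf[OF assms surj] S_invariant_compose_Hopf
      by (auto simp: regular)
  qed
qed

end
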